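(* For every $r$-configuration $F$ of $U$ and $V$, $\phi(\Phi(F))=F$. In particular, $\Phi$ is injective on $r$-configurations.
   Context: $n,r\ge1$, $m=rn$. $U=\{u_1\prec\cdots\prec u_n\}$, $V=\{v_1\prec\cdots\prec v_n\}$; $\overline U=U\times[r]$, $\overline V=V\times[r]$ ordered lexicographically (write $u^s$ for $(u,s)$). An $r$-configuration is a bijection between $\overline U$ and $\overline V$; a quasi configuration is a partial matching. Pairs $(\bar u,\bar v),(\bar u',\bar v')$ are noncrossing if ($\bar u\prec\bar u'$ and $\bar v\prec\bar v'$) or ($\bar u'\prec\bar u$ and $\bar v'\prec\bar v$). For an $r$-configuration $F$: $a_{\bar u}$ is the maximum size of a set of pairwise noncrossing pairs of $F$ containing the pair $(\bar u,\bar v')\in F$ at $\bar u$, all of whose pairs $(x,y)$ satisfy $x\preceq\bar u$, $y\preceq\bar v'$; $b_{\bar v}$ is defined symmetrically; $\Phi(F)=a_{u_1^1}\cdots a_{u_n^r}|b_{v_1^1}\cdots b_{v_n^r}$, the walk with steps $e_{a_{\bar u}}$ ($\bar u$ increasing) then $-e_{b_{\bar v}}$ ($\bar v$ increasing). For a walk $w=a_{u_1^1}\cdots a_{u_n^r}|b_{v_1^1}\cdots b_{v_n^r}$, $A_k(w)=\{\bar u:a_{\bar u}=k\}$, $B_k(w)=\{\bar v:b_{\bar v}=k\}$; connecting equal-size ordered sets $A,B$ in a crossing way means pairing the $i$-th smallest of $A$ with the $i$-th largest of $B$; $\phi(w)$ is the quasi configuration obtained by, for each $k$: if $|A_k(w)|\ge|B_k(w)|$,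 connecting the $|B_k(w)|$ smallest elements of $A_k(w)$ with $B_k(w)$ in a crossing way, otherwise connecting $A_k(w)$ with the $|A_k(w)|$ largest elements of $B_k(w)$ in a crossing way. *)

theory Defs
  imports Main "HOL-Library.Product_Lexorder"
begin

text \<open>Elements of \<open>U\<times>[r]\<close> (resp. \<open>V\<times>[r]\<close>) are encoded as pairs \<open>(i,s)\<close>
  with \<open>1 \<le> i \<le> n\<close>, \<open>1 \<le> s \<le> r\<close>, standing for \<open>u_i^s\<close> (resp. \<open>v_i^s\<close>);
  the order on pairs is the lexicographic one (Product_Lexorder).\<close>

type_synonym elem = "nat \<times> nat"
type_synonym pairing = "(elem \<times> elem) set"
type_synonym walk = "(elem \<Rightarrow> nat) \<times> (elem \<Rightarrow> nat)"

definition barset :: "nat \<Rightarrow> nat \<Rightarrow> elem set" where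
  "barset n r = {1..n} \<times> {1..r}"

definition is_config :: "nat \<Rightarrow> nat \<Rightarrow> pairing \<Rightarrow> bool" where
  "is_config n r F \<longleftrightarrow> F \<subseteq> barset n r \<times> barset n r
     \<and> (\<forall>u\<in>barset n r. \<exists>!v. (u, v) \<in> F)
     \<and> (\<forall>v\<in>barset n r. \<exists>!u. (u, v) \<in> F)"

definition noncrossing :: "elem \<times> elem \<Rightarrow> elem \<times> elem \<Rightarrow> bool" where
  "noncrossing p q \<longleftrightarrow>
     (fst p < fst q \<and> snd p < snd q) \<or> (fst q < fst p \<and> snd q < snd p)"

definition pw_noncrossing :: "pairing \<Rightarrow> bool" where
  "pw_noncrossing S \<longleftrightarrow> (\<forall>p\<in>S. \<forall>q\<in>S. p \<noteq> q \<longrightarrow> noncrossing p q)"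

definition a_val :: "pairing \<Rightarrow> elem \<Rightarrow> nat" where
  "a_val F u = Max {card S | S v'. (u, v') \<in> F \<and> S \<subseteq> F \<and> (u, v') \<in> S
      \<and> pw_noncrossing S \<and> (\<forall>(x, y)\<in>S. x \<le> u \<and> y \<le> v')}"

definition b_val :: "pairing \<Rightarrow> elem \<Rightarrow> nat" where
  "b_val F v = Max {card S | S u'. (u', v) \<in> F \<and> S \<subseteq> F \<and> (u', v) \<in> S
      \<and> pw_noncrossing S \<and> (\<forall>(x, y)\<in>S. x \<le> u' \<and> y \<le> v)}"

text \<open>\<open>\<Phi>(F)\<close>: the walk \<open>a_{u_1^1}\<dots>a_{u_n^r} | b_{v_1^1}\<dots>b_{v_n^r}\<close>, recorded as
  the pair of label functions (the step sequence is determined by them and the order).\<close>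
definition Phi :: "pairing \<Rightarrow> walk" where
  "Phi F = (a_val F, b_val F)"

definition A_set :: "nat \<Rightarrow> nat \<Rightarrow> walk \<Rightarrow> nat \<Rightarrow> elem set" where
  "A_set n r w k = {u \<in> barset n r. fst w u = k}"

definition B_set :: "nat \<Rightarrow> nat \<Rightarrow> walk \<Rightarrow> nat \<Rightarrow> elem set" where
  "B_set n r w k = {v \<in> barset n r. snd w v = k}"

definition connect_crossing :: "elem set \<Rightarrow> elem set \<Rightarrow> pairing" where
  "connect_crossing A B = set (zip (sorted_list_of_set A) (rev (sorted_list_of_set B)))"

definition smallest :: "nat \<Rightarrow> elem set \<Rightarrow> elem set" where
  "smallest k A = set (take k (sorted_list_of_set A))"

definition largest :: "nat \<Rightarrow> elem set \<Rightarrow> elem set" where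
  "largest k A = set (drop (card A - k) (sorted_list_of_set A))"

definition phi :: "nat \<Rightarrow> nat \<Rightarrow> walk \<Rightarrow> pairing" where
  "phi n r w = (\<Union>k. let A = A_set n r w k; B = B_set n r w k in
      if card A \<ge> card B then connect_crossing (smallest (card B) A) B
      else connect_crossing A (largest (card A) B))"

end

theory Submission
  imports Defs
begin

text \<open>For a pair \<open>(u, v)\<close> of a configuration \<open>F\<close>, both \<open>a_u\<close> and \<open>b_v\<close> equal the length
  \<open>rank F (u, v)\<close> of a longest noncrossing chain of \<open>F\<close> ending in \<open>(u, v)\<close>.  Extending such a
  chain by a pair that is noncrossing and above \<open>(u, v)\<close> shows that the rank strictly increases
  along noncrossing pairs.  Hence the pairs of rank \<open>k\<close> cross pairwise: \<open>B_k\<close> is the image of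
  \<open>A_k\<close> under the bijection, the two have the same size, and the pairs of rank \<open>k\<close> are exactly
  the crossing connection of \<open>A_k\<close> with \<open>B_k\<close>, which is what \<open>\<phi>\<close> builds.\<close>

definition chains_below :: "pairing \<Rightarrow> elem \<times> elem \<Rightarrow> pairing set" where
  "chains_below F p = {S. S \<subseteq> F \<and> p \<in> S \<and> pw_noncrossing S
      \<and> (\<forall>(x, y)\<in>S. x \<le> fst p \<and> y \<le> snd p)}"

definition rank :: "pairing \<Rightarrow> elem \<times> elem \<Rightarrow> nat" where
  "rank F p = Max (card ` chains_below F p)"

lemma singleton_in_chains_below: "p \<in> F \<Longrightarrow> {p} \<in> chains_below F p"
  by (auto simp: chains_below_def pw_noncrossing_def)

lemma finite_chains_below: "finite F \<Longrightarrow> finite (chains_below F p)"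
  by (rule finite_subset[of _ "Pow F"]) (auto simp: chains_below_def)

lemma rank_attained:
  assumes "finite F" and "p \<in> F"
  obtains S where "S \<in> chains_below F p" and "rank F p = card S"
  using Max_in[of "card ` chains_below F p"] singleton_in_chains_below[OF assms(2)]
    finite_chains_below[OF assms(1)] unfolding rank_def by fastforce

lemma card_le_rank: "finite F \<Longrightarrow> S \<in> chains_below F p \<Longrightarrow> card S \<le> rank F p"
  unfolding rank_def by (simp add: finite_chains_below)

lemma pw_noncrossing_insert_above:
  assumes "pw_noncrossing S" and "\<And>x. x \<in> S \<Longrightarrow> fst x < fst q \<and> snd x < snd q"
  shows "pw_noncrossing (insert q S)"
  using assms unfolding pw_noncrossing_def noncrossing_def by blast

lemma rank_strict_mono:
  assumes "finite F" and "p \<in> F" and "q \<in> F"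
    and "fst p < fst q" and "snd p < snd q"
  shows "rank F p < rank F q"
proof -
  obtain S where S: "S \<in> chains_below F p" and rank_p: "rank F p = card S"
    using rank_attained[OF assms(1,2)] .
  have below_p: "fst x \<le> fst p \<and> snd x \<le> snd p" if "x \<in> S" for x
    using S that by (auto simp: chains_below_def)
  then have below_q: "fst x < fst q \<and> snd x < snd q" if "x \<in> S" for x
    using that assms(4,5) le_less_trans by blast
  have "insert q S \<in> chains_below F q"
    using S assms(3) below_q pw_noncrossing_insert_above[OF _ below_q]
    by (fastforce simp: chains_below_def less_imp_le)
  then have "card (insert q S) \<le> rank F q"
    using card_le_rank[OF assms(1)] by blast
  moreover have "q \<notin> S"
    using below_q by blast
  moreover have "finite S"
    using S assms(1) finite_subset by (auto simp: chains_below_def)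
  ultimately show ?thesis using rank_p by simp
qed

lemma sorted_list_of_set_image_antimono:
  fixes g :: "'a::linorder \<Rightarrow> 'b::linorder"
  assumes "finite A" and "\<And>x y. x \<in> A \<Longrightarrow> y \<in> A \<Longrightarrow> x < y \<Longrightarrow> g y < g x"
  shows "sorted_list_of_set (g ` A) = rev (map g (sorted_list_of_set A))"
proof (rule strict_sorted_equal)
  have "sorted_wrt (\<lambda>x y. g y < g x) (sorted_list_of_set A)"
    using sorted_wrt_mono_rel[OF _ strict_sorted_list_of_set[of A]] assms by auto
  then show "sorted_wrt (<) (rev (map g (sorted_list_of_set A)))"
    by (simp add: sorted_wrt_rev sorted_wrt_map)
qed (use assms(1) in simp_all)

lemma connect_crossing_image_antimono:
  assumes "finite A" and "\<And>x y. x \<in> A \<Longrightarrow> y \<in> A \<Longrightarrow> x < y \<Longrightarrow> g y < g x"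
  shows "connect_crossing A (g ` A) = (\<lambda>u. (u, g u)) ` A"
  using assms(1)
  by (simp add: connect_crossing_def sorted_list_of_set_image_antimono[OF assms]
      zip_map2 zip_same_conv_map)

lemma a_val_eq_rank:
  assumes "\<And>v'. (u, v') \<in> F \<longleftrightarrow> v' = v"
  shows "a_val F u = rank F (u, v)"
proof -
  have "{card S | S v'. (u, v') \<in> F \<and> S \<subseteq> F \<and> (u, v') \<in> S \<and> pw_noncrossing S
      \<and> (\<forall>(x, y)\<in>S. x \<le> u \<and> y \<le> v')} = card ` chains_below F (u, v)"
    unfolding chains_below_def using assms by auto
  then show ?thesis unfolding a_val_def rank_def by simp
qed

lemma b_val_eq_rank:
  assumes "\<And>u'. (u', v) \<in> F \<longleftrightarrow> u' = u"
  shows "b_val F v = rank F (u, v)"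
proof -
  have "{card S | S u'. (u', v) \<in> F \<and> S \<subseteq> F \<and> (u', v) \<in> S \<and> pw_noncrossing S
      \<and> (\<forall>(x, y)\<in>S. x \<le> u' \<and> y \<le> v)} = card ` chains_below F (u, v)"
    unfolding chains_below_def using assms by auto
  then show ?thesis unfolding b_val_def rank_def by simp
qed

lemma is_configE:
  assumes "is_config n r F"
  obtains f where "bij_betw f (barset n r) (barset n r)"
    and "F = (\<lambda>u. (u, f u)) ` barset n r"
proof -
  let ?X = "barset n r"
  define f where "f u = (THE v. (u, v) \<in> F)" for u
  have F_sub: "F \<subseteq> ?X \<times> ?X" and left_unique: "\<And>u. u \<in> ?X \<Longrightarrow> \<exists>!v. (u, v) \<in> F"
    and right_unique: "\<And>v. v \<in> ?X \<Longrightarrow> \<exists>!u. (u, v) \<in> F"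
    using assms unfolding is_config_def by auto
  have in_F_iff: "(u, v) \<in> F \<longleftrightarrow> u \<in> ?X \<and> v = f u" for u v
  proof
    assume uv: "(u, v) \<in> F"
    then have "u \<in> ?X" using F_sub by blast
    then show "u \<in> ?X \<and> v = f u"
      using uv left_unique by (simp add: f_def the1_equality)
  next
    assume "u \<in> ?X \<and> v = f u"
    then show "(u, v) \<in> F" using left_unique theI' unfolding f_def by metis
  qed
  have graph: "F = (\<lambda>u. (u, f u)) ` ?X"
  proof (rule set_eqI)
    fix z :: "elem \<times> elem"
    show "z \<in> F \<longleftrightarrow> z \<in> (\<lambda>u. (u, f u)) ` ?X"
      by (cases z) (simp add: in_F_iff image_iff)
  qed
  have f_into: "f u \<in> ?X" if "u \<in> ?X" for u
    using F_sub in_F_iff that by blast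
  have "inj_on f ?X"
  proof (rule inj_onI)
    fix u u' assume "u \<in> ?X" "u' \<in> ?X" "f u = f u'"
    then show "u = u'"
      using right_unique[OF f_into] in_F_iff by metis
  qed
  moreover have "f ` ?X = ?X"
  proof
    show "?X \<subseteq> f ` ?X"
      using right_unique in_F_iff by blast
  qed (use f_into in blast)
  ultimately show thesis
    using that graph by (simp add: bij_betw_def)
qed

lemma level_set_antimono:
  assumes "finite X" and "inj_on f X" and "F = (\<lambda>u. (u, f u)) ` X"
    and "u \<in> X" and "u' \<in> X" and "u < u'"
    and "rank F (u, f u) = rank F (u', f u')"
  shows "f u' < f u"
proof (rule ccontr)
  assume "\<not> f u' < f u"
  moreover have "f u' \<noteq> f u"
    using assms(2,4-6) inj_on_eq_iff by fastforce
  ultimately have "f u < f u'" by simp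
  then have "rank F (u, f u) < rank F (u', f u')"
    using assms by (intro rank_strict_mono) auto
  then show False using assms(7) by simp
qed

lemma phi_level_of_Phi:
  assumes bij: "bij_betw f (barset n r) (barset n r)"
    and F: "F = (\<lambda>u. (u, f u)) ` barset n r"
  shows "(let A = A_set n r (Phi F) k; B = B_set n r (Phi F) k in
      if card A \<ge> card B then connect_crossing (smallest (card B) A) B
      else connect_crossing A (largest (card A) B))
    = (\<lambda>u. (u, f u)) ` {u \<in> barset n r. rank F (u, f u) = k}"
proof -
  let ?X = "barset n r"
  define A where "A = {u \<in> ?X. rank F (u, f u) = k}"
  have fin: "finite ?X" by (simp add: barset_def)
  then have "finite A" by (simp add: A_def)
  have inj: "inj_on f ?X" using bij bij_betw_def by blast
  have a_rank: "a_val F u = rank F (u, f u)" if "u \<in> ?X" for u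
    using that by (intro a_val_eq_rank) (auto simp: F)
  have b_rank: "b_val F (f u) = rank F (u, f u)" if "u \<in> ?X" for u
    using that inj by (intro b_val_eq_rank) (auto simp: F inj_on_eq_iff)
  have A_eq: "A_set n r (Phi F) k = A"
    using a_rank by (auto simp: A_set_def Phi_def A_def)
  have "B_set n r (Phi F) k = {v \<in> f ` ?X. b_val F v = k}"
    using bij_betw_imp_surj_on[OF bij] by (simp add: B_set_def Phi_def)
  also have "\<dots> = f ` {u \<in> ?X. b_val F (f u) = k}"
    by blast
  also have "\<dots> = f ` A"
    using b_rank by (auto simp: A_def)
  finally have B_eq: "B_set n r (Phi F) k = f ` A" .
  have card_B: "card (f ` A) = card A"
    using inj_on_subset[OF inj] by (intro card_image) (auto simp: A_def)
  have "connect_crossing A (f ` A) = (\<lambda>u. (u, f u)) ` A"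
    using \<open>finite A\<close> level_set_antimono[OF fin inj F] unfolding A_def
    by (intro connect_crossing_image_antimono) auto
  then show ?thesis
    using \<open>finite A\<close> unfolding A_def[symmetric]
    by (simp add: A_eq B_eq card_B smallest_def Let_def)
qed

lemma phi_Phi:
  assumes "is_config n r F"
  shows "phi n r (Phi F) = F"
proof -
  obtain f where bij: "bij_betw f (barset n r) (barset n r)"
    and F: "F = (\<lambda>u. (u, f u)) ` barset n r"
    using is_configE[OF assms] .
  have "phi n r (Phi F) = (\<Union>k. (\<lambda>u. (u, f u)) ` {u \<in> barset n r. rank F (u, f u) = k})"
    unfolding phi_def phi_level_of_Phi[OF bij F] ..
  also have "\<dots> = F"
    by (auto simp: F)
  finally show ?thesis .
qed

theorem lemma5:
  fixes n r :: nat
  assumes "n \<ge> 1" and "r \<ge> 1"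
  shows "(\<forall>F. is_config n r F \<longrightarrow> phi n r (Phi F) = F)
         \<and> inj_on Phi {F. is_config n r F}"
proof
  show "\<forall>F. is_config n r F \<longrightarrow> phi n r (Phi F) = F"
    using phi_Phi by blast
  show "inj_on Phi {F. is_config n r F}"
    by (rule inj_on_inverseI[where g = "phi n r"]) (simp add: phi_Phi)
qed

end
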